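(* Let $R$ be a nontrivial finite commutative ring, $\Sigma$ an alphabet, and $r\in R\langle\langle\Sigma^*\rangle\rangle$ a series that is rational over $R$. Then $r\in\mathrm{Rev}(R,\Sigma)$ if and only if $\mathrm{supp}(r+x\cdot\underline{\Sigma^*})\in\mathrm{RevL}(R,\Sigma)$ for all $x\in R$, where $x\cdot\underline{\Sigma^*}$ denotes the series with coefficient $x$ at every word of $\Sigma^*$.
   Context: A ring is a semiring $(R,+,\cdot,0,1)$ whose additive monoid is an abelian group; nontrivial means $0\neq1$. For a semiring $S$ and finite nonempty alphabet $\Sigma$, a series is a map $r\colon\Sigma^*\to S$ with value $(r,w)$; the set of series is $S\langle\langle\Sigma^*\rangle\rangle$ with pointwise addition; the support is $\mathrm{supp}(r)=\{w\mid(r,w)\neq0\}$. A weighted automaton over $S$ and $\Sigma$ is $\mathcal{A}=(Q,\sigma,\iota,\tau)$ with $Q$ finite, $\sigma\colon Q\times\Sigma\times Q\to S$, $\iota,\tau\colon Q\to S$; a run on $w=a_1\cdots a_t$ is $q_0a_1q_1\cdots a_tq_t$ with all $\sigma(q_{k-1},a_k,q_k)\neq0$, of weight $\iota(q_0)\sigma(q_0,a_1,q_1)\cdots\sigma(q_{t-1},a_t,q_t)\tau(q_t)$, and $(\|\mathcal{A}\|,w)$ is the sum of weights of all runs on $w$. A series is rational over $S$ if it equals $\|\mathcal{A}\|$ for some weighted automaton $\mathcal{A}$ over $S$. $\mathcal{A}$ is reversible if for all $p,p',q,q'\in Q$, $a\in\Sigma$: $\sigma(p,a,q)\neq0\neq\sigma(p,a,q')$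 implies $q=q'$, and $\sigma(p,a,q)\neq0\neq\sigma(p',a,q)$ implies $p=p'$. $\mathrm{Rev}(S,\Sigma)$ is the set of series realised by reversible weighted automata over $S$ and $\Sigma$, and $\mathrm{RevL}(S,\Sigma)=\{\mathrm{supp}(r)\mid r\in\mathrm{Rev}(S,\Sigma)\}$. *)

theory Defs
  imports Main
begin

text \<open>Weighted automata over a semiring 'r and a finite alphabet given by the
finite type 'a (so the alphabet is UNIV :: 'a set and words are 'a list).\<close>

record ('a, 'r) wa =
  states :: "nat set"
  trans  :: "nat \<Rightarrow> 'a \<Rightarrow> nat \<Rightarrow> 'r"
  init   :: "nat \<Rightarrow> 'r"
  fin    :: "nat \<Rightarrow> 'r"

definition wf_wa :: "('a, 'r::zero) wa \<Rightarrow> bool" where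
  "wf_wa A \<longleftrightarrow> finite (states A)"

definition runs :: "('a, 'r::zero) wa \<Rightarrow> 'a list \<Rightarrow> nat list set" where
  "runs A w = {qs. length qs = Suc (length w) \<and> set qs \<subseteq> states A \<and>
      (\<forall>k < length w. trans A (qs ! k) (w ! k) (qs ! Suc k) \<noteq> 0)}"

definition run_weight :: "('a, 'r::semiring_1) wa \<Rightarrow> 'a list \<Rightarrow> nat list \<Rightarrow> 'r" where
  "run_weight A w qs =
     init A (qs ! 0) * prod_list (map (\<lambda>k. trans A (qs ! k) (w ! k) (qs ! Suc k)) [0..<length w])
       * fin A (qs ! length w)"

definition behaviour :: "('a, 'r::semiring_1) wa \<Rightarrow> 'a list \<Rightarrow> 'r" where
  "behaviour A w = (\<Sum>qs\<in>runs A w. run_weight A w qs)"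

definition rational :: "('a list \<Rightarrow> 'r::semiring_1) \<Rightarrow> bool" where
  "rational r \<longleftrightarrow> (\<exists>A. wf_wa A \<and> behaviour A = r)"

definition reversible :: "('a, 'r::zero) wa \<Rightarrow> bool" where
  "reversible A \<longleftrightarrow>
     (\<forall>p\<in>states A. \<forall>p'\<in>states A. \<forall>q\<in>states A. \<forall>q'\<in>states A. \<forall>a.
        (trans A p a q \<noteq> 0 \<and> trans A p a q' \<noteq> 0 \<longrightarrow> q = q') \<and>
        (trans A p a q \<noteq> 0 \<and> trans A p' a q \<noteq> 0 \<longrightarrow> p = p'))"

definition Rev :: "('a list \<Rightarrow> 'r::semiring_1) set" where
  "Rev = {r. \<exists>A. wf_wa A \<and> reversible A \<and> behaviour A = r}"

definition supp :: "('a list \<Rightarrow> 'r::zero) \<Rightarrow> 'a list set" where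
  "supp r = {w. r w \<noteq> 0}"

text \<open>RevL TYPE('r): supports of reversibly realisable series over semiring 'r.\<close>
definition RevL :: "'r::semiring_1 itself \<Rightarrow> ('a list set) set" where
  "RevL _ = {L. \<exists>r :: 'a list \<Rightarrow> 'r. r \<in> Rev \<and> L = supp r}"

end

theory Submission
  imports Defs "HOL-Library.FuncSet"
begin

text \<open>Series in Rev are closed under sums (disjoint union of automata) and contain the
constants, which gives the forward direction. Conversely, if s y is reversible with the support
of r - y, then r w is the unique y with s y w = 0, so r is a finite sum of the series
w \<mapsto> (if s y w = 0 then y else 0); it therefore suffices that f \<circ> s is reversible for every
reversible s and every f : R \<rightarrow> R.

A reversible automaton has at most one run from each state on each word, so its behaviour is a
finite sum, over initial states p, of single path weights. Since R is finite, every z has an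
idempotent power z^k, and these idempotents generate a finite Boolean algebra of orthogonal
atoms summing to 1. On the component of an atom, each z acts either invertibly or nilpotently,
so the path weight times the atom can be computed by an injective partial automaton with finitely
many states (a thread), which dies when the weight becomes zero. A function of a sum of such
threads is then obtained by inclusion-exclusion over the sets of surviving threads, each
computed by a product of threads that is again injective.\<close>

section \<open>Path weights from a state\<close>

lemma prod_list_zeroI: "(0::'a::{monoid_mult, mult_zero}) \<in> set xs \<Longrightarrow> prod_list xs = 0"
  by (induction xs) auto

fun weight_from :: "('a, 'r::semiring_1) wa \<Rightarrow> nat \<Rightarrow> 'a list \<Rightarrow> 'r" where
  "weight_from A p [] = fin A p"
| "weight_from A p (a # w) = (\<Sum>q\<in>states A. trans A p a q * weight_from A q w)"

definition state_seqs :: "nat set \<Rightarrow> nat \<Rightarrow> nat list set" where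
  "state_seqs Q n = {qs. length qs = Suc n \<and> set qs \<subseteq> Q}"

definition path_weight :: "('a, 'r::semiring_1) wa \<Rightarrow> 'a list \<Rightarrow> nat list \<Rightarrow> 'r" where
  "path_weight A w qs =
     prod_list (map (\<lambda>k. trans A (qs ! k) (w ! k) (qs ! Suc k)) [0..<length w]) * fin A (qs ! length w)"

lemma path_weight_Cons:
  assumes "qs \<noteq> []"
  shows "path_weight A (a # w) (p # qs) = trans A p a (hd qs) * path_weight A w qs"
proof -
  have "[0..<length (a # w)] = 0 # map Suc [0..<length w]"
    by (simp only: length_Cons map_Suc_upt upt_conv_Cons[OF zero_less_Suc])
  then show ?thesis
    using assms by (simp add: path_weight_def o_def hd_conv_nth mult.assoc)
qed

lemma state_seqs_0: "state_seqs Q 0 = (\<lambda>q. [q]) ` Q"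
  unfolding state_seqs_def by (auto simp: length_Suc_conv)

lemma state_seqs_Suc: "state_seqs Q (Suc n) = (\<lambda>(p, qs). p # qs) ` (Q \<times> state_seqs Q n)"
  unfolding state_seqs_def by (fastforce simp: length_Suc_conv)

lemma finite_state_seqs: "finite Q \<Longrightarrow> finite (state_seqs Q n)"
  unfolding state_seqs_def
  by (rule rev_finite_subset[OF finite_lists_length_eq[of Q "Suc n"]]) auto

lemma sum_state_seqs_path_weight:
  assumes "finite (states A)"
  shows "(\<Sum>qs\<in>state_seqs (states A) (length w). g (hd qs) * path_weight A w qs)
       = (\<Sum>q\<in>states A. g q * weight_from A q w)"
proof (induction w arbitrary: g)
  case Nil
  then show ?case by (simp add: state_seqs_0 sum.reindex inj_on_def path_weight_def)
next
  case (Cons a w)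
  let ?S = "state_seqs (states A) (length w)"
  have inj: "inj_on (\<lambda>(p, qs). p # qs) (states A \<times> ?S)"
    by (auto simp: inj_on_def)
  have nonempty: "qs \<noteq> []" if "qs \<in> ?S" for qs
    using that by (auto simp: state_seqs_def)
  have "(\<Sum>qs\<in>state_seqs (states A) (length (a # w)). g (hd qs) * path_weight A (a # w) qs)
      = (\<Sum>(p, qs)\<in>states A \<times> ?S. g p * path_weight A (a # w) (p # qs))"
    by (simp only: length_Cons state_seqs_Suc sum.reindex[OF inj] comp_def) (simp add: split_def)
  also have "\<dots> = (\<Sum>p\<in>states A. g p * (\<Sum>qs\<in>?S. trans A p a (hd qs) * path_weight A w qs))"
    by (simp add: sum.cartesian_product[symmetric] sum_distrib_left path_weight_Cons nonempty
        cong: sum.cong)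
  also have "\<dots> = (\<Sum>p\<in>states A. g p * weight_from A p (a # w))"
    using Cons by simp
  finally show ?case .
qed

lemma behaviour_eq_sum_weight_from:
  assumes "finite (states A)"
  shows "behaviour A w = (\<Sum>p\<in>states A. init A p * weight_from A p w)"
proof -
  let ?S = "state_seqs (states A) (length w)"
  have runs_subset: "runs A w \<subseteq> ?S"
    by (auto simp: runs_def state_seqs_def)
  have "run_weight A w qs = 0" if "qs \<in> ?S - runs A w" for qs
  proof -
    from that obtain k where "k < length w" "trans A (qs ! k) (w ! k) (qs ! Suc k) = 0"
      by (auto simp: runs_def state_seqs_def)
    then have "(\<Prod>k\<leftarrow>[0..<length w]. trans A (qs ! k) (w ! k) (qs ! Suc k)) = 0"
      by (intro prod_list_zeroI) force
    then show ?thesis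
      by (simp add: run_weight_def)
  qed
  then have "behaviour A w = (\<Sum>qs\<in>?S. run_weight A w qs)"
    unfolding behaviour_def
    by (intro sum.mono_neutral_left finite_state_seqs assms runs_subset) auto
  also have "\<dots> = (\<Sum>qs\<in>?S. init A (hd qs) * path_weight A w qs)"
    by (intro sum.cong) (auto simp: run_weight_def path_weight_def state_seqs_def length_Suc_conv mult.assoc)
  also have "\<dots> = (\<Sum>p\<in>states A. init A p * weight_from A p w)"
    by (rule sum_state_seqs_path_weight[OF assms])
  finally show ?thesis .
qed

section \<open>Closure of reversible series under sums\<close>

lemma Rev_zero: "(\<lambda>w. 0) \<in> Rev"
proof -
  let ?A = "\<lparr>states = {}, trans = \<lambda>p a q. 0, init = \<lambda>p. 0, fin = \<lambda>p. 0\<rparr> :: ('a, 'r::semiring_1) wa"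
  have "behaviour ?A = (\<lambda>w. 0)" and "wf_wa ?A" and "reversible ?A"
    by (auto simp: behaviour_eq_sum_weight_from wf_wa_def reversible_def)
  then show ?thesis unfolding Rev_def by blast
qed

definition wa_disjoint_union :: "('a, 'r::semiring_1) wa \<Rightarrow> ('a, 'r) wa \<Rightarrow> ('a, 'r) wa" where
  "wa_disjoint_union A B =
    \<lparr>states = (\<lambda>p. 2 * p) ` states A \<union> (\<lambda>p. Suc (2 * p)) ` states B,
     trans = (\<lambda>p a q. if even p \<and> even q then trans A (p div 2) a (q div 2)
                     else if odd p \<and> odd q then trans B (p div 2) a (q div 2) else 0),
     init = (\<lambda>p. if even p then init A (p div 2) else init B (p div 2)),
     fin = (\<lambda>p. if even p then fin A (p div 2) else fin B (p div 2))\<rparr>"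

lemma sum_states_wa_disjoint_union:
  fixes h :: "nat \<Rightarrow> 'b::comm_monoid_add"
  assumes "finite (states A)" "finite (states B)"
  shows "(\<Sum>q\<in>states (wa_disjoint_union A B). h q)
       = (\<Sum>q\<in>states A. h (2 * q)) + (\<Sum>q\<in>states B. h (Suc (2 * q)))"
proof -
  have "(\<lambda>p. 2 * p) ` states A \<inter> (\<lambda>p. Suc (2 * p)) ` states B = {}"
    by auto presburger
  moreover have "inj_on (\<lambda>p::nat. 2 * p) X" "inj_on (\<lambda>p::nat. Suc (2 * p)) X" for X
    by (auto simp: inj_on_def)
  ultimately show ?thesis
    using assms by (simp add: wa_disjoint_union_def sum.union_disjoint sum.reindex)
qed

lemma weight_from_wa_disjoint_union:
  assumes "finite (states A)" "finite (states B)"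
  shows "weight_from (wa_disjoint_union A B) (2 * p) w = weight_from A p w
       \<and> weight_from (wa_disjoint_union A B) (Suc (2 * p)) w = weight_from B p w"
proof (induction w arbitrary: p)
  case Nil
  then show ?case by (simp add: wa_disjoint_union_def)
next
  case (Cons a w)
  then show ?case
    by (simp add: sum_states_wa_disjoint_union[OF assms]) (simp add: wa_disjoint_union_def)
qed

lemma behaviour_wa_disjoint_union:
  assumes "finite (states A)" "finite (states B)"
  shows "behaviour (wa_disjoint_union A B) w = behaviour A w + behaviour B w"
proof -
  have "finite (states (wa_disjoint_union A B))"
    using assms by (simp add: wa_disjoint_union_def)
  then show ?thesis
    by (simp add: behaviour_eq_sum_weight_from assms sum_states_wa_disjoint_union
        weight_from_wa_disjoint_union) (simp add: wa_disjoint_union_def)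
qed

lemma reversible_wa_disjoint_union:
  assumes "reversible A" "reversible B"
  shows "reversible (wa_disjoint_union A B)"
proof -
  let ?U = "wa_disjoint_union A B"
  have states: "(even p \<and> p div 2 \<in> states A) \<or> (odd p \<and> p div 2 \<in> states B)"
    if "p \<in> states ?U" for p
    using that by (auto simp: wa_disjoint_union_def)
  have trans: "(even p \<and> even q \<and> trans A (p div 2) a (q div 2) \<noteq> 0)
             \<or> (odd p \<and> odd q \<and> trans B (p div 2) a (q div 2) \<noteq> 0)"
    if "trans ?U p a q \<noteq> 0" for p a q
    using that by (auto simp: wa_disjoint_union_def split: if_splits)
  have parity_div: "x = y" if "x div 2 = y div 2" "even x = even y" for x y :: nat
    using that by (metis div_mult_mod_eq odd_iff_mod_2_eq_one even_iff_mod_2_eq_zero)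
  show ?thesis
    unfolding reversible_def
  proof (intro ballI allI conjI impI)
    fix p p' q q' a
    assume "p \<in> states ?U" "p' \<in> states ?U" "q \<in> states ?U" "q' \<in> states ?U"
    note S = states[OF this(1)] states[OF this(2)] states[OF this(3)] states[OF this(4)]
    show "q = q'" if "trans ?U p a q \<noteq> 0 \<and> trans ?U p a q' \<noteq> 0"
      using that trans[of p a q] trans[of p a q'] S assms
      unfolding reversible_def by (metis parity_div)
    show "p = p'" if "trans ?U p a q \<noteq> 0 \<and> trans ?U p' a q \<noteq> 0"
      using that trans[of p a q] trans[of p' a q] S assms
      unfolding reversible_def by (metis parity_div)
  qed
qed

lemma Rev_add:
  assumes "r \<in> Rev" "s \<in> Rev"
  shows "(\<lambda>w. r w + s w) \<in> Rev"
proof -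
  from assms obtain A B where A: "wf_wa A" "reversible A" "behaviour A = r"
    and B: "wf_wa B" "reversible B" "behaviour B = s"
    by (auto simp: Rev_def)
  then have "behaviour (wa_disjoint_union A B) = (\<lambda>w. r w + s w)"
    and "wf_wa (wa_disjoint_union A B)" and "reversible (wa_disjoint_union A B)"
    by (auto simp: wf_wa_def behaviour_wa_disjoint_union reversible_wa_disjoint_union)
      (simp add: wa_disjoint_union_def)
  then show ?thesis unfolding Rev_def by blast
qed

lemma Rev_sum:
  assumes "finite I" "\<And>i. i \<in> I \<Longrightarrow> F i \<in> Rev"
  shows "(\<lambda>w. \<Sum>i\<in>I. F i w) \<in> Rev"
  using assms
proof (induction I rule: finite_induct)
  case empty
  then show ?case using Rev_zero by simp
next
  case (insert i I)
  then show ?case using Rev_add[of "F i" "\<lambda>w. \<Sum>i\<in>I. F i w"] by simp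
qed

section \<open>Reversible partial automata\<close>

fun partial_run :: "('x \<Rightarrow> 'a \<Rightarrow> 'x option) \<Rightarrow> 'x \<Rightarrow> 'a list \<Rightarrow> 'x option" where
  "partial_run \<delta> x [] = Some x"
| "partial_run \<delta> x (a # w) = (case \<delta> x a of None \<Rightarrow> None | Some y \<Rightarrow> partial_run \<delta> y w)"

definition run_series :: "('x \<Rightarrow> 'a \<Rightarrow> 'x option) \<Rightarrow> 'x \<Rightarrow> ('x \<Rightarrow> 'r::zero) \<Rightarrow> 'a list \<Rightarrow> 'r" where
  "run_series \<delta> x g w = (case partial_run \<delta> x w of None \<Rightarrow> 0 | Some y \<Rightarrow> g y)"

lemma run_series_Nil: "run_series \<delta> x g [] = g x"
  by (simp add: run_series_def)

lemma run_series_Cons: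
  "run_series \<delta> x g (a # w) = (case \<delta> x a of None \<Rightarrow> 0 | Some y \<Rightarrow> run_series \<delta> y g w)"
  by (simp add: run_series_def split: option.split)

definition reversible_pdfa :: "'x set \<Rightarrow> ('x \<Rightarrow> 'a \<Rightarrow> 'x option) \<Rightarrow> bool" where
  "reversible_pdfa X \<delta> \<longleftrightarrow>
     (\<forall>x\<in>X. \<forall>a y. \<delta> x a = Some y \<longrightarrow> y \<in> X) \<and>
     (\<forall>x\<in>X. \<forall>x'\<in>X. \<forall>a y. \<delta> x a = Some y \<longrightarrow> \<delta> x' a = Some y \<longrightarrow> x = x')"

definition wa_of_pdfa ::
    "('x \<Rightarrow> nat) \<Rightarrow> 'x set \<Rightarrow> ('x \<Rightarrow> 'a \<Rightarrow> 'x option) \<Rightarrow> 'x \<Rightarrow> ('x \<Rightarrow> 'r::semiring_1) \<Rightarrow> ('a, 'r) wa" where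
  "wa_of_pdfa enc X \<delta> x0 g =
    \<lparr>states = enc ` X,
     trans = (\<lambda>p a q. of_bool (\<exists>x\<in>X. \<exists>y\<in>X. p = enc x \<and> q = enc y \<and> \<delta> x a = Some y)),
     init = (\<lambda>p. of_bool (p = enc x0)),
     fin = (\<lambda>p. g (the_inv_into X enc p))\<rparr>"

lemma states_wa_of_pdfa: "states (wa_of_pdfa enc X \<delta> x0 g) = enc ` X"
  by (simp add: wa_of_pdfa_def)

lemma trans_wa_of_pdfa:
  assumes "inj_on enc X" "x \<in> X" "y \<in> X"
  shows "trans (wa_of_pdfa enc X \<delta> x0 g) (enc x) a (enc y) = of_bool (\<delta> x a = Some y)"
  using assms by (auto simp: wa_of_pdfa_def inj_on_def)

lemma weight_from_wa_of_pdfa: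
  assumes "finite X" "inj_on enc X" "reversible_pdfa X \<delta>" "x \<in> X"
  shows "weight_from (wa_of_pdfa enc X \<delta> x0 g) (enc x) w = run_series \<delta> x g w"
  using assms(4)
proof (induction w arbitrary: x)
  case Nil
  then show ?case
    using assms(2) by (simp add: wa_of_pdfa_def run_series_Nil the_inv_into_f_f)
next
  case (Cons a w)
  let ?A = "wa_of_pdfa enc X \<delta> x0 g"
  have closed: "y \<in> X" if "\<delta> x a = Some y" for y
    using assms(3) Cons.prems that unfolding reversible_pdfa_def by blast
  have "weight_from ?A (enc x) (a # w) = (\<Sum>y\<in>X. trans ?A (enc x) a (enc y) * weight_from ?A (enc y) w)"
    using assms(2) by (simp add: states_wa_of_pdfa sum.reindex)
  also have "\<dots> = (\<Sum>y\<in>X. if \<delta> x a = Some y then weight_from ?A (enc y) w else 0)"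
    using assms(2) Cons.prems by (intro sum.cong) (simp_all add: trans_wa_of_pdfa)
  also have "\<dots> = run_series \<delta> x g (a # w)"
    using assms(1) closed Cons.IH by (auto simp: run_series_Cons split: option.split)
  finally show ?case .
qed

lemma reversible_wa_of_pdfa:
  assumes "inj_on enc X" "reversible_pdfa X \<delta>"
  shows "reversible (wa_of_pdfa enc X \<delta> x0 g)"
  unfolding reversible_def
proof (intro ballI allI conjI impI)
  fix p p' q q' a
  assume "p \<in> states (wa_of_pdfa enc X \<delta> x0 g)" "p' \<in> states (wa_of_pdfa enc X \<delta> x0 g)"
    "q \<in> states (wa_of_pdfa enc X \<delta> x0 g)" "q' \<in> states (wa_of_pdfa enc X \<delta> x0 g)"
  then obtain x x' y y' where xs: "x \<in> X" "x' \<in> X" "y \<in> X" "y' \<in> X"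
    "p = enc x" "p' = enc x'" "q = enc y" "q' = enc y'"
    by (auto simp: wa_of_pdfa_def)
  show "q = q'" if "trans (wa_of_pdfa enc X \<delta> x0 g) p a q \<noteq> 0 \<and> trans (wa_of_pdfa enc X \<delta> x0 g) p a q' \<noteq> 0"
    using that xs assms(1) by (auto simp: trans_wa_of_pdfa)
  show "p = p'" if "trans (wa_of_pdfa enc X \<delta> x0 g) p a q \<noteq> 0 \<and> trans (wa_of_pdfa enc X \<delta> x0 g) p' a q \<noteq> 0"
  proof -
    have "\<delta> x a = Some y" "\<delta> x' a = Some y"
      using that xs assms(1) by (simp_all add: trans_wa_of_pdfa)
    then show ?thesis
      using xs assms(2) unfolding reversible_pdfa_def by blast
  qed
qed

lemma Rev_run_series:
  fixes g :: "'x \<Rightarrow> 'r::semiring_1"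
  assumes "finite X" "reversible_pdfa X \<delta>" "x0 \<in> X"
  shows "run_series \<delta> x0 g \<in> Rev"
proof -
  obtain enc :: "'x \<Rightarrow> nat" where enc: "inj_on enc X"
    using finite_imp_inj_to_nat_seg[OF assms(1)] by blast
  let ?A = "wa_of_pdfa enc X \<delta> x0 g"
  have "behaviour ?A w = weight_from ?A (enc x0) w" for w
    using assms(1,3) by (simp add: behaviour_eq_sum_weight_from states_wa_of_pdfa) (simp add: wa_of_pdfa_def)
  also have "weight_from ?A (enc x0) w = run_series \<delta> x0 g w" for w
    by (rule weight_from_wa_of_pdfa[OF assms(1) enc assms(2,3)])
  finally have "behaviour ?A = run_series \<delta> x0 g"
    by (simp add: fun_eq_iff)
  moreover have "wf_wa ?A" "reversible ?A"
    using assms(1,2) enc by (simp_all add: wf_wa_def states_wa_of_pdfa reversible_wa_of_pdfa)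
  ultimately show ?thesis
    unfolding Rev_def by blast
qed

lemma Rev_const:
  fixes c :: "'r::semiring_1"
  shows "(\<lambda>w :: 'a list. c) \<in> Rev"
proof -
  let ?\<delta> = "\<lambda>(x::unit) (a::'a). Some x"
  have "partial_run ?\<delta> () w = Some ()" for w
    by (induction w) auto
  then have "run_series ?\<delta> () (\<lambda>_. c) = (\<lambda>w. c)"
    unfolding run_series_def by simp
  moreover have "run_series ?\<delta> () (\<lambda>_. c) \<in> Rev"
    by (rule Rev_run_series) (auto simp: reversible_pdfa_def)
  ultimately show ?thesis by simp
qed

definition prod_step ::
    "('j \<Rightarrow> 'x \<Rightarrow> 'a \<Rightarrow> 'x option) \<Rightarrow> 'j set \<Rightarrow> ('j \<Rightarrow> 'x) \<Rightarrow> 'a \<Rightarrow> ('j \<Rightarrow> 'x) option" where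
  "prod_step \<delta> S c a =
     (if \<forall>j\<in>S. \<delta> j (c j) a \<noteq> None then Some (\<lambda>j\<in>S. the (\<delta> j (c j) a)) else None)"

lemma prod_step_SomeD: "prod_step \<delta> S c a = Some c' \<Longrightarrow> j \<in> S \<Longrightarrow> \<delta> j (c j) a = Some (c' j)"
  by (auto simp: prod_step_def split: if_splits)

lemma reversible_pdfa_prod_step:
  assumes "\<And>j. j \<in> S \<Longrightarrow> reversible_pdfa (X j) (\<delta> j)"
  shows "reversible_pdfa (PiE S X) (prod_step \<delta> S)"
  unfolding reversible_pdfa_def
proof (intro conjI ballI allI impI)
  fix c a c'
  assume "c \<in> PiE S X" "prod_step \<delta> S c a = Some c'"
  then show "c' \<in> PiE S X"
    using assms by (fastforce simp: prod_step_def reversible_pdfa_def split: if_splits)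
next
  fix c1 c2 a c'
  assume c: "c1 \<in> PiE S X" "c2 \<in> PiE S X"
    and step: "prod_step \<delta> S c1 a = Some c'" "prod_step \<delta> S c2 a = Some c'"
  show "c1 = c2"
  proof (rule PiE_ext[OF c])
    fix j assume "j \<in> S"
    with step have "\<delta> j (c1 j) a = Some (c' j)" "\<delta> j (c2 j) a = Some (c' j)"
      by (simp_all add: prod_step_SomeD)
    then show "c1 j = c2 j"
      using assms[OF \<open>j \<in> S\<close>] c \<open>j \<in> S\<close> unfolding reversible_pdfa_def by blast
  qed
qed

lemma partial_run_prod_step:
  assumes "c \<in> extensional S"
  shows "partial_run (prod_step \<delta> S) c w =
    (if \<forall>j\<in>S. partial_run (\<delta> j) (c j) w \<noteq> None
     then Some (\<lambda>j\<in>S. the (partial_run (\<delta> j) (c j) w)) else None)"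
  using assms
proof (induction w arbitrary: c)
  case Nil
  then show ?case by (simp add: extensional_restrict)
next
  case (Cons a w)
  show ?case
  proof (cases "\<forall>j\<in>S. \<delta> j (c j) a \<noteq> None")
    case True
    define c' where "c' = (\<lambda>j\<in>S. the (\<delta> j (c j) a))"
    have step: "prod_step \<delta> S c a = Some c'"
      using True by (simp add: prod_step_def c'_def)
    have component: "partial_run (\<delta> j) (c j) (a # w) = partial_run (\<delta> j) (c' j) w" if "j \<in> S" for j
      using prod_step_SomeD[OF step that] by simp
    have "partial_run (prod_step \<delta> S) c (a # w) = partial_run (prod_step \<delta> S) c' w"
      using step by simp
    also have "\<dots> = (if \<forall>j\<in>S. partial_run (\<delta> j) (c' j) w \<noteq> None
                      then Some (\<lambda>j\<in>S. the (partial_run (\<delta> j) (c' j) w)) else None)"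
      unfolding c'_def by (intro Cons.IH restrict_extensional)
    also have "\<dots> = (if \<forall>j\<in>S. partial_run (\<delta> j) (c j) (a # w) \<noteq> None
                      then Some (\<lambda>j\<in>S. the (partial_run (\<delta> j) (c j) (a # w))) else None)"
      using component by (simp cong: restrict_cong del: partial_run.simps)
    finally show ?thesis .
  next
    case False
    then obtain j where "j \<in> S" "\<delta> j (c j) a = None"
      by blast
    then show ?thesis
      by (auto simp: prod_step_def intro!: bexI[of _ j])
  qed
qed

lemma sum_Pow_moebius:
  fixes F :: "'c set \<Rightarrow> 'b::ring_1"
  assumes "finite A"
  shows "(\<Sum>S\<in>Pow A. \<Sum>T\<in>Pow S. (-1) ^ (card S - card T) * F T) = F A"
proof -
  have "F A = (\<Sum>S\<in>Pow A. (-1) ^ card S * (\<Sum>T\<in>Pow S. (-1) ^ card T * F T))"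
    by (rule inclusion_exclusion_symmetric[OF _ assms]) simp
  also have "\<dots> = (\<Sum>S\<in>Pow A. \<Sum>T\<in>Pow S. (-1) ^ (card S - card T) * F T)"
  proof (intro sum.cong refl)
    fix S assume "S \<in> Pow A"
    then have "finite S"
      using assms finite_subset by auto
    then have "(-1 :: 'b) ^ card S * (-1) ^ card T = (-1) ^ (card S - card T)" if "T \<subseteq> S" for T
      using that by (simp add: card_mono neg_one_power_add_eq_neg_one_power_diff flip: power_add)
    then show "(-1) ^ card S * (\<Sum>T\<in>Pow S. (-1) ^ card T * F T)
             = (\<Sum>T\<in>Pow S. (-1) ^ (card S - card T) * F T)"
      by (simp add: sum_distrib_left mult.assoc[symmetric])
  qed
  finally show ?thesis by simp
qed

definition moebius_value ::
    "('r::comm_monoid_add \<Rightarrow> 'b::ring_1) \<Rightarrow> ('j \<Rightarrow> 'x \<Rightarrow> 'r) \<Rightarrow> 'j set \<Rightarrow> ('j \<Rightarrow> 'x) \<Rightarrow> 'b" where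
  "moebius_value f g S c = (\<Sum>T\<in>Pow S. (-1) ^ (card S - card T) * f (\<Sum>j\<in>T. g j (c j)))"

text \<open>The product automaton over S survives exactly when every run in S survives, so the sum
collapses to the subsets of the surviving runs, where Moebius inversion applies.\<close>

lemma sum_Pow_run_series_prod_step:
  assumes "finite J"
  shows "(\<Sum>S\<in>Pow J. run_series (prod_step \<delta> S) (restrict x S) (moebius_value f g S) w)
       = f (\<Sum>j\<in>J. run_series (\<delta> j) (x j) (g j) w)"
proof -
  define alive where "alive = {j\<in>J. partial_run (\<delta> j) (x j) w \<noteq> None}"
  define F where "F T = f (\<Sum>j\<in>T. g j (the (partial_run (\<delta> j) (x j) w)))" for T
  have alive: "alive \<subseteq> J" "finite alive"
    using assms finite_subset by (auto simp: alive_def)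
  have series_S: "run_series (prod_step \<delta> S) (restrict x S) (moebius_value f g S) w
      = (if S \<subseteq> alive then \<Sum>T\<in>Pow S. (-1) ^ (card S - card T) * F T else 0)"
    if "S \<in> Pow J" for S
  proof -
    have "moebius_value f g S (\<lambda>j\<in>S. the (partial_run (\<delta> j) (x j) w))
        = (\<Sum>T\<in>Pow S. (-1) ^ (card S - card T) * F T)"
      unfolding moebius_value_def F_def
      by (intro sum.cong refl arg_cong2[where f = "(*)"] arg_cong[where f = f]) auto
    then show ?thesis
      using that by (auto simp: run_series_def partial_run_prod_step alive_def cong: restrict_cong)
  qed
  have "Pow J \<inter> {S. S \<subseteq> alive} = Pow alive"
    using alive by auto
  then have "(\<Sum>S\<in>Pow J. run_series (prod_step \<delta> S) (restrict x S) (moebius_value f g S) w)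
           = (\<Sum>S\<in>Pow alive. \<Sum>T\<in>Pow S. (-1) ^ (card S - card T) * F T)"
    using assms by (simp add: series_S sum.If_cases)
  also have "\<dots> = F alive"
    using alive(2) by (rule sum_Pow_moebius)
  also have "\<dots> = f (\<Sum>j\<in>J. run_series (\<delta> j) (x j) (g j) w)"
    unfolding F_def using alive assms
    by (intro arg_cong[where f = f] sum.mono_neutral_cong_left)
      (auto simp: alive_def run_series_def split: option.split)
  finally show ?thesis .
qed

lemma Rev_fun_sum_run_series:
  fixes f :: "'r::comm_monoid_add \<Rightarrow> 'b::ring_1" and g :: "'j \<Rightarrow> 'x \<Rightarrow> 'r"
  assumes "finite J"
    and "\<And>j. j \<in> J \<Longrightarrow> finite (X j) \<and> reversible_pdfa (X j) (\<delta> j) \<and> x j \<in> X j"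
  shows "(\<lambda>w. f (\<Sum>j\<in>J. run_series (\<delta> j) (x j) (g j) w)) \<in> Rev"
proof -
  have "run_series (prod_step \<delta> S) (restrict x S) (moebius_value f g S) \<in> Rev" if "S \<in> Pow J" for S
  proof (rule Rev_run_series)
    have "finite S"
      using that assms(1) finite_subset by auto
    then show "finite (PiE S X)"
      using that assms(2) by (intro finite_PiE) auto
    show "reversible_pdfa (PiE S X) (prod_step \<delta> S)"
      using that assms(2) by (intro reversible_pdfa_prod_step) auto
    show "restrict x S \<in> PiE S X"
      using that assms(2) by auto
  qed
  then have "(\<lambda>w. \<Sum>S\<in>Pow J. run_series (prod_step \<delta> S) (restrict x S) (moebius_value f g S) w) \<in> Rev"
    using assms(1) by (intro Rev_sum) auto
  also have "(\<lambda>w. \<Sum>S\<in>Pow J. run_series (prod_step \<delta> S) (restrict x S) (moebius_value f g S) w)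
           = (\<lambda>w. f (\<Sum>j\<in>J. run_series (\<delta> j) (x j) (g j) w))"
    by (intro ext sum_Pow_run_series_prod_step assms(1))
  finally show ?thesis .
qed

section \<open>Idempotent atoms of a finite commutative ring\<close>

lemma ex_idempotent_power: "\<exists>k\<ge>1. (z::'a::{monoid_mult, finite}) ^ k * z ^ k = z ^ k"
proof -
  have "\<not> inj (\<lambda>n::nat. z ^ n)"
    using finite_imageD[of "\<lambda>n::nat. z ^ n" UNIV] by auto
  then obtain a b where "a \<noteq> b" "z ^ a = z ^ b"
    unfolding inj_def by blast
  define i d where "i = min a b" and "d = max a b - min a b"
  have "1 \<le> d" "z ^ (i + d) = z ^ i"
    using \<open>a \<noteq> b\<close> \<open>z ^ a = z ^ b\<close> by (auto simp: i_def d_def min_def max_def)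
  have shift: "z ^ (n + d) = z ^ n" if "i \<le> n" for n
  proof -
    have "z ^ (n + d) = z ^ (n - i) * z ^ (i + d)"
      using that by (simp flip: power_add)
    also have "\<dots> = z ^ n"
      using that by (simp add: \<open>z ^ (i + d) = z ^ i\<close> flip: power_add)
    finally show ?thesis .
  qed
  have periodic: "z ^ (n + t * d) = z ^ n" if "i \<le> n" for n t
  proof (induction t)
    case (Suc t)
    have "z ^ (n + Suc t * d) = z ^ ((n + t * d) + d)"
      by (simp add: algebra_simps)
    also have "\<dots> = z ^ (n + t * d)"
      using that by (intro shift) simp
    finally show ?case
      using Suc by simp
  qed simp
  let ?k = "Suc i * d"
  have "Suc i \<le> ?k"
    using mult_le_mono2[OF \<open>1 \<le> d\<close>, of "Suc i"] by simp
  then have "i \<le> ?k" "1 \<le> ?k"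
    by simp_all
  moreover have "z ^ ?k * z ^ ?k = z ^ ?k"
    using periodic[OF \<open>i \<le> ?k\<close>, of "Suc i"] by (simp flip: power_add)
  ultimately show ?thesis by blast
qed

definition idem_exp :: "'a::{monoid_mult, finite} \<Rightarrow> nat" where
  "idem_exp z = (SOME k. 1 \<le> k \<and> z ^ k * z ^ k = z ^ k)"

definition idem_power :: "'a::{monoid_mult, finite} \<Rightarrow> 'a" where
  "idem_power z = z ^ idem_exp z"

lemma idem_exp_pos: "1 \<le> idem_exp z"
  and idem_power_idem: "idem_power z * idem_power z = idem_power z"
  using someI_ex[OF ex_idempotent_power[of z]] by (simp_all add: idem_exp_def idem_power_def)

definition atom :: "'r::{comm_ring_1, finite} set \<Rightarrow> 'r" where
  "atom B = (\<Prod>z\<in>B. idem_power z) * (\<Prod>z\<in>-B. 1 - idem_power z)"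

lemma sum_atom: "(\<Sum>B\<in>UNIV. atom B) = (1::'r::{comm_ring_1, finite})"
proof -
  have "(\<Prod>z\<in>(UNIV::'r set). idem_power z + (1 - idem_power z))
      = (\<Sum>B\<in>Pow UNIV. (\<Prod>z\<in>B. idem_power z) * (\<Prod>z\<in>UNIV - B. 1 - idem_power z))"
    by (rule prod_add) simp
  then show ?thesis
    by (simp add: atom_def Compl_eq_Diff_UNIV)
qed

lemma one_minus_idem_power_idem:
  "(1 - idem_power z) * (1 - idem_power z) = 1 - idem_power (z::'r::{comm_ring_1, finite})"
  using idem_power_idem[of z] by (simp add: algebra_simps)

lemma atom_idem: "atom B * atom B = (atom B :: 'r::{comm_ring_1, finite})"
proof -
  have "atom B * atom B = ((\<Prod>z\<in>B. idem_power z) * (\<Prod>z\<in>B. idem_power z))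
      * ((\<Prod>z\<in>-B. 1 - idem_power z) * (\<Prod>z\<in>-B. 1 - idem_power z))"
    by (simp add: atom_def ac_simps)
  also have "\<dots> = atom B"
    by (simp add: atom_def idem_power_idem one_minus_idem_power_idem flip: prod.distrib)
  finally show ?thesis .
qed

lemma atom_mult_idem_power_in:
  assumes "z \<in> B"
  shows "atom B * idem_power z = atom B"
proof -
  have "atom B * idem_power z
      = (idem_power z * idem_power z) * (\<Prod>x\<in>B - {z}. idem_power x) * (\<Prod>x\<in>-B. 1 - idem_power x)"
    using assms by (simp add: atom_def prod.remove ac_simps)
  also have "\<dots> = atom B"
    using assms by (simp add: atom_def idem_power_idem prod.remove)
  finally show ?thesis .
qed

lemma atom_mult_idem_power_notin:
  assumes "z \<notin> B"
  shows "atom B * idem_power z = 0"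
proof -
  have "atom B * idem_power z
      = ((1 - idem_power z) * idem_power z) * (\<Prod>x\<in>B. idem_power x) * (\<Prod>x\<in>-B - {z}. 1 - idem_power x)"
    using assms by (simp add: atom_def prod.remove ac_simps)
  also have "(1 - idem_power z) * idem_power z = 0"
    using idem_power_idem[of z] by (simp add: algebra_simps)
  finally show ?thesis by simp
qed

lemma atom_ideal_mult_cancel:
  fixes u v z :: "'r::{comm_ring_1, finite}"
  assumes "u * atom B = u" "v * atom B = v" "z \<in> B" "u * z = v * z"
  shows "u = v"
proof -
  have "x = (x * z) * z ^ (idem_exp z - 1)" if "x * atom B = x" for x
  proof -
    have "x = x * (atom B * idem_power z)"
      by (simp add: atom_mult_idem_power_in[OF assms(3)] that)
    also have "\<dots> = x * idem_power z"
      using that by (simp flip: mult.assoc)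
    also have "\<dots> = (x * z) * z ^ (idem_exp z - 1)"
      using idem_exp_pos[of z] by (simp add: idem_power_def mult.assoc power_eq_if)
    finally show ?thesis .
  qed
  then show ?thesis
    using assms by metis
qed

lemma atom_ideal_power_eq_0:
  fixes u z :: "'r::{comm_ring_1, finite}"
  assumes "u * atom B = u" "z \<notin> B" "idem_exp z \<le> k"
  shows "u * z ^ k = 0"
proof -
  have "u * z ^ k = (u * atom B) * idem_power z * z ^ (k - idem_exp z)"
    using assms(1,3) by (simp add: idem_power_def mult.assoc flip: power_add)
  also have "\<dots> = u * (atom B * idem_power z) * z ^ (k - idem_exp z)"
    by (simp only: mult.assoc)
  finally show ?thesis
    by (simp add: atom_mult_idem_power_notin[OF assms(2)])
qed

section \<open>Threads of a reversible automaton\<close>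

definition prod_powers :: "('r::{comm_monoid_mult, finite} \<Rightarrow> nat) \<Rightarrow> 'r" where
  "prod_powers n = (\<Prod>z\<in>UNIV. z ^ n z)"

lemma prod_powers_zero: "prod_powers (\<lambda>_. 0) = 1"
  by (simp add: prod_powers_def)

lemma prod_powers_eq: "prod_powers n = z ^ n z * (\<Prod>x\<in>UNIV - {z}. x ^ n x)"
  unfolding prod_powers_def by (simp add: prod.remove)

lemma prod_powers_upd_Suc: "prod_powers (n(z := Suc (n z))) = z * prod_powers n"
proof -
  have "(\<Prod>x\<in>UNIV - {z}. x ^ (n(z := Suc (n z))) x) = (\<Prod>x\<in>UNIV - {z}. x ^ n x)"
    by (intro prod.cong) auto
  then show ?thesis
    using prod_powers_eq[of "n(z := Suc (n z))" z] prod_powers_eq[of n z] by (simp add: mult.assoc)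
qed

locale reversible_finite_wa =
  fixes A :: "('a, 'r::{comm_ring_1, finite}) wa"
  assumes finite_states: "finite (states A)" and reversible: "reversible A"
begin

definition next_state :: "nat \<Rightarrow> 'a \<Rightarrow> nat option" where
  "next_state q a =
     (if \<exists>q'\<in>states A. trans A q a q' \<noteq> 0
      then Some (SOME q'. q' \<in> states A \<and> trans A q a q' \<noteq> 0) else None)"

lemma next_state_SomeD:
  assumes "next_state q a = Some q'"
  shows "q' \<in> states A \<and> trans A q a q' \<noteq> 0"
proof -
  have ex: "\<exists>x. x \<in> states A \<and> trans A q a x \<noteq> 0"
    and q': "q' = (SOME x. x \<in> states A \<and> trans A q a x \<noteq> 0)"
    using assms by (auto simp: next_state_def split: if_splits)
  show ?thesis
    unfolding q' by (rule someI_ex[OF ex])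
qed

lemma next_state_eqI:
  assumes "q \<in> states A" "q' \<in> states A" "trans A q a q' \<noteq> 0"
  shows "next_state q a = Some q'"
proof -
  have "\<exists>q''. next_state q a = Some q''"
    using assms unfolding next_state_def by auto
  then obtain q'' where q'': "next_state q a = Some q''"
    by blast
  then have "q'' = q'"
    using next_state_SomeD[OF q''] assms reversible unfolding reversible_def by blast
  with q'' show ?thesis by simp
qed

lemma next_state_NoneD: "next_state q a = None \<Longrightarrow> q' \<in> states A \<Longrightarrow> trans A q a q' = 0"
  unfolding next_state_def by (auto split: if_splits)

lemma next_state_inj:
  assumes "q1 \<in> states A" "q2 \<in> states A" "next_state q1 a = Some q'" "next_state q2 a = Some q'"
  shows "q1 = q2"
  using assms next_state_SomeD[OF assms(3)] next_state_SomeD[OF assms(4)] reversible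
  unfolding reversible_def by blast

lemma weight_from_Cons_next_state:
  assumes "q \<in> states A"
  shows "weight_from A q (a # w)
       = (case next_state q a of None \<Rightarrow> 0 | Some q' \<Rightarrow> trans A q a q' * weight_from A q' w)"
proof (cases "next_state q a")
  case None
  then show ?thesis using next_state_NoneD by simp
next
  case (Some q')
  have "trans A q a x * weight_from A x w = (if x = q' then trans A q a q' * weight_from A q' w else 0)"
    if "x \<in> states A" for x
    using next_state_eqI[OF assms that] Some by (cases "trans A q a x = 0") auto
  then have "weight_from A q (a # w) = (\<Sum>x\<in>states A. if x = q' then trans A q a q' * weight_from A q' w else 0)"
    by simp
  then show ?thesis
    using next_state_SomeD[OF Some] finite_states Some by simp
qed

text \<open>A thread for the atom B stores the state, the product u of the weights read so far
that lie in B, and how often each weight z outside B was read. Weights in B act invertibly on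
the ideal of atom B, so the step is injective; a weight z outside B satisfies
atom B * z ^ idem_exp z = 0, so the thread may die once its count reaches idem_exp z.\<close>

definition threads :: "'r set \<Rightarrow> (nat \<times> 'r \<times> ('r \<Rightarrow> nat)) set" where
  "threads B = {(q, u, n). q \<in> states A \<and> u * atom B = u \<and> (\<forall>z. n z < idem_exp z)}"

fun thread_step :: "'r set \<Rightarrow> nat \<times> 'r \<times> ('r \<Rightarrow> nat) \<Rightarrow> 'a \<Rightarrow> (nat \<times> 'r \<times> ('r \<Rightarrow> nat)) option" where
  "thread_step B (q, u, n) a =
     (case next_state q a of
        None \<Rightarrow> None
      | Some q' \<Rightarrow>
          if trans A q a q' \<in> B then Some (q', u * trans A q a q', n)
          else if Suc (n (trans A q a q')) < idem_exp (trans A q a q')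
          then Some (q', u, n(trans A q a q' := Suc (n (trans A q a q'))))
          else None)"

fun thread_value :: "nat \<times> 'r \<times> ('r \<Rightarrow> nat) \<Rightarrow> 'r" where
  "thread_value (q, u, n) = u * prod_powers n * fin A q"

lemma finite_threads: "finite (threads B)"
proof -
  have "{n::'r \<Rightarrow> nat. \<forall>z. n z < idem_exp z} \<subseteq> PiE UNIV (\<lambda>z. {..<idem_exp z})"
    by (auto simp: PiE_iff)
  then have "finite {n::'r \<Rightarrow> nat. \<forall>z. n z < idem_exp z}"
    by (rule finite_subset) (simp add: finite_PiE)
  moreover have "threads B \<subseteq> states A \<times> UNIV \<times> {n. \<forall>z. n z < idem_exp z}"
    by (auto simp: threads_def)
  ultimately show ?thesis
    using finite_states by (simp add: finite_subset)
qed

lemma start_in_threads: "p \<in> states A \<Longrightarrow> (p, atom B, \<lambda>_. 0) \<in> threads B"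
  using idem_exp_pos by (auto simp: threads_def atom_idem Suc_le_eq)

lemma thread_step_closed:
  assumes "c \<in> threads B" "thread_step B c a = Some c'"
  shows "c' \<in> threads B"
proof -
  obtain q u n where c: "c = (q, u, n)"
    by (cases c)
  obtain q' where next_q: "next_state q a = Some q'"
    using assms c by (auto split: option.splits)
  have "u * atom B = u"
    using assms(1) c by (simp add: threads_def)
  then have "(u * z) * atom B = u * z" for z
    by (metis mult.assoc mult.commute)
  then show ?thesis
    using assms c next_q next_state_SomeD[OF next_q] by (auto simp: threads_def split: if_splits)
qed

lemma thread_step_inj:
  assumes c: "c1 \<in> threads B" "c2 \<in> threads B"
    and step: "thread_step B c1 a = Some c'" "thread_step B c2 a = Some c'"
  shows "c1 = c2"
proof -
  obtain q1 u1 n1 q2 u2 n2 where c12: "c1 = (q1, u1, n1)" "c2 = (q2, u2, n2)"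
    by (cases c1, cases c2) auto
  obtain q1' q2' where next12: "next_state q1 a = Some q1'" "next_state q2 a = Some q2'"
    using step c12 by (auto split: option.splits)
  then have "q1' = fst c'" "q2' = fst c'"
    using step c12 by (auto split: if_splits)
  then have "q1 = q2"
    using next_state_inj next12 c c12 by (auto simp: threads_def)
  with next12 have "q1' = q2'" by simp
  define z where "z = trans A q1 a q1'"
  show "c1 = c2"
  proof (cases "z \<in> B")
    case True
    then have "u1 * z = u2 * z" "n1 = n2"
      using step c12 next12 \<open>q1 = q2\<close> \<open>q1' = q2'\<close> by (auto simp: z_def)
    moreover have "u1 * atom B = u1" "u2 * atom B = u2"
      using c c12 by (auto simp: threads_def)
    ultimately show ?thesis
      using c12 \<open>q1 = q2\<close> atom_ideal_mult_cancel[OF _ _ True] by simp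
  next
    case False
    then have "u1 = u2" "n1(z := Suc (n1 z)) = n2(z := Suc (n2 z))"
      using step c12 next12 \<open>q1 = q2\<close> \<open>q1' = q2'\<close> by (auto simp: z_def split: if_splits)
    then have "n1 = n2"
      by (metis fun_upd_eqD fun_upd_idem_iff fun_upd_upd nat.inject)
    then show ?thesis
      using c12 \<open>q1 = q2\<close> \<open>u1 = u2\<close> by simp
  qed
qed

lemma reversible_pdfa_thread_step: "reversible_pdfa (threads B) (thread_step B)"
  unfolding reversible_pdfa_def using thread_step_closed thread_step_inj by blast

lemma thread_step_Some_weight:
  assumes "(q, u, n) \<in> threads B" "thread_step B (q, u, n) a = Some (q', u', n')"
  shows "u' * prod_powers n' * weight_from A q' w = u * prod_powers n * weight_from A q (a # w)"
proof -
  obtain q'' where next_q: "next_state q a = Some q''"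
    using assms(2) by (auto split: option.splits)
  with assms(2) have "q'' = q'"
    by (auto split: if_splits)
  define z where "z = trans A q a q'"
  have weight: "weight_from A q (a # w) = z * weight_from A q' w"
    using assms(1) weight_from_Cons_next_state[of q a w] next_q \<open>q'' = q'\<close>
    by (simp add: threads_def z_def)
  show ?thesis
  proof (cases "z \<in> B")
    case True
    then have "u' = u * z" "n' = n"
      using assms(2) next_q \<open>q'' = q'\<close> by (simp_all add: z_def)
    with weight show ?thesis
      by (simp add: ac_simps)
  next
    case False
    then have "u' = u" "n' = n(z := Suc (n z))"
      using assms(2) next_q \<open>q'' = q'\<close> by (simp_all add: z_def split: if_splits)
    with weight show ?thesis
      by (simp add: prod_powers_upd_Suc ac_simps)
  qed
qed

lemma thread_step_None_weight:
  assumes "(q, u, n) \<in> threads B" "thread_step B (q, u, n) a = None"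
  shows "u * prod_powers n * weight_from A q (a # w) = 0"
proof (cases "next_state q a")
  case None
  then show ?thesis
    using assms(1) weight_from_Cons_next_state[of q a w] by (simp add: threads_def)
next
  case (Some q')
  define z where "z = trans A q a q'"
  have "u * atom B = u"
    using assms(1) by (simp add: threads_def)
  moreover have "z \<notin> B" "idem_exp z \<le> Suc (n z)"
    using assms(2) Some by (simp_all add: z_def split: if_splits)
  ultimately have "u * z ^ Suc (n z) = 0"
    by (rule atom_ideal_power_eq_0)
  moreover have "u * prod_powers n * weight_from A q (a # w)
      = (u * z ^ Suc (n z)) * (\<Prod>x\<in>UNIV - {z}. x ^ n x) * weight_from A q' w"
    using assms(1) weight_from_Cons_next_state[of q a w] Some prod_powers_eq[of n z]
    by (simp add: threads_def z_def ac_simps)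
  ultimately show ?thesis
    by simp
qed

lemma run_series_thread:
  assumes "(q, u, n) \<in> threads B"
  shows "run_series (thread_step B) (q, u, n) thread_value w = u * prod_powers n * weight_from A q w"
  using assms
proof (induction w arbitrary: q u n)
  case Nil
  then show ?case by (simp add: run_series_Nil)
next
  case (Cons a w)
  show ?case
  proof (cases "thread_step B (q, u, n) a")
    case None
    then show ?thesis
      using thread_step_None_weight[OF Cons.prems] by (simp add: run_series_Cons)
  next
    case (Some c')
    obtain q' u' n' where c': "c' = (q', u', n')"
      by (cases c')
    with Some have "(q', u', n') \<in> threads B"
      using thread_step_closed[OF Cons.prems] by simp
    with Some c' Cons.IH show ?thesis
      using thread_step_Some_weight[OF Cons.prems] by (simp add: run_series_Cons)
  qed
qed

lemma behaviour_eq_sum_thread_series: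
  "behaviour A w = (\<Sum>j\<in>states A \<times> UNIV.
     run_series (thread_step (snd j)) (fst j, atom (snd j), \<lambda>_. 0) (\<lambda>c. init A (fst j) * thread_value c) w)"
proof -
  have start: "run_series (thread_step B) (p, atom B, \<lambda>_. 0) (\<lambda>c. init A p * thread_value c) w
      = init A p * atom B * weight_from A p w" if "p \<in> states A" for p B
  proof -
    have "run_series (thread_step B) (p, atom B, \<lambda>_. 0) (\<lambda>c. init A p * thread_value c) w
        = init A p * run_series (thread_step B) (p, atom B, \<lambda>_. 0) thread_value w"
      by (simp add: run_series_def split: option.split)
    then show ?thesis
      using run_series_thread[OF start_in_threads[OF that]] by (simp add: prod_powers_zero mult.assoc)
  qed
  have "(\<Sum>j\<in>states A \<times> UNIV.
      run_series (thread_step (snd j)) (fst j, atom (snd j), \<lambda>_. 0) (\<lambda>c. init A (fst j) * thread_value c) w)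
      = (\<Sum>p\<in>states A. \<Sum>B\<in>UNIV. init A p * atom B * weight_from A p w)"
    unfolding sum.cartesian_product by (intro sum.cong) (auto simp: start)
  also have "\<dots> = (\<Sum>p\<in>states A. init A p * (\<Sum>B\<in>UNIV. atom B) * weight_from A p w)"
    by (simp add: sum_distrib_left sum_distrib_right)
  also have "\<dots> = behaviour A w"
    by (simp add: sum_atom behaviour_eq_sum_weight_from finite_states)
  finally show ?thesis by simp
qed

end

lemma Rev_comp:
  fixes s :: "'a list \<Rightarrow> 'r::{comm_ring_1, finite}" and f :: "'r \<Rightarrow> 'b::ring_1"
  assumes "s \<in> Rev"
  shows "(\<lambda>w. f (s w)) \<in> Rev"
proof -
  from assms obtain A :: "('a, 'r) wa" where A: "wf_wa A" "reversible A" "behaviour A = s"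
    by (auto simp: Rev_def)
  interpret reversible_finite_wa A
    using A by unfold_locales (auto simp: wf_wa_def)
  have "(\<lambda>w. f (\<Sum>j\<in>states A \<times> UNIV.
      run_series (thread_step (snd j)) (fst j, atom (snd j), \<lambda>_. 0) (\<lambda>c. init A (fst j) * thread_value c) w)) \<in> Rev"
  proof (rule Rev_fun_sum_run_series[where \<delta> = "\<lambda>j. thread_step (snd j)"
        and x = "\<lambda>j. (fst j, atom (snd j), \<lambda>_. 0)" and g = "\<lambda>j c. init A (fst j) * thread_value c"
        and X = "\<lambda>j. threads (snd j)"])
    show "finite (states A \<times> (UNIV :: 'r set set))"
      using finite_states by simp
    show "finite (threads (snd j)) \<and> reversible_pdfa (threads (snd j)) (thread_step (snd j))
        \<and> (fst j, atom (snd j), \<lambda>_. 0) \<in> threads (snd j)" if "j \<in> states A \<times> UNIV" for j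
      using that by (auto simp: finite_threads reversible_pdfa_thread_step start_in_threads)
  qed
  then show ?thesis
    using A(3) by (simp flip: behaviour_eq_sum_thread_series)
qed

theorem proposition7:
  fixes r :: "'a::finite list \<Rightarrow> 'r::{comm_ring_1, finite}"
  assumes "rational r"
  shows "r \<in> Rev \<longleftrightarrow>
           (\<forall>x::'r. supp (\<lambda>w. r w + x) \<in> RevL TYPE('r))"
proof
  assume r: "r \<in> Rev"
  have "(\<lambda>w. r w + x) \<in> Rev" for x :: 'r
    using Rev_add[OF r Rev_const[of x]] by simp
  then show "\<forall>x::'r. supp (\<lambda>w. r w + x) \<in> RevL TYPE('r)"
    unfolding RevL_def by blast
next
  assume "\<forall>x::'r. supp (\<lambda>w. r w + x) \<in> RevL TYPE('r)"
  then have "\<forall>y. \<exists>s :: 'a list \<Rightarrow> 'r. s \<in> Rev \<and> supp s = supp (\<lambda>w. r w + - y)"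
    unfolding RevL_def by blast
  then obtain s :: "'r \<Rightarrow> 'a list \<Rightarrow> 'r"
    where s: "\<And>y. s y \<in> Rev \<and> supp (s y) = supp (\<lambda>w. r w + - y)"
    by metis
  have s_zero_iff: "s y w = 0 \<longleftrightarrow> r w = y" for y w
    using s[of y] unfolding supp_def by (simp add: set_eq_iff)
  have "(\<lambda>w. if s y w = 0 then y else 0) \<in> Rev" for y
    using Rev_comp[of "s y" "\<lambda>t. if t = 0 then y else 0"] s by simp
  then have "(\<lambda>w. \<Sum>y\<in>UNIV. if s y w = 0 then y else 0) \<in> Rev"
    by (intro Rev_sum) simp_all
  moreover have "(\<lambda>w. \<Sum>y\<in>UNIV. if s y w = 0 then y else 0) = r"
    by (simp add: s_zero_iff)
  ultimately show "r \<in> Rev"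
    by simp
qed

end
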